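(* Let $X$ be a random variable taking values in a set $\mathcal{X}$, $Y \in [0,1]$ a target outcome, and $H$ a random variable (expert feedback) taking values in an arbitrary domain $\mathcal{H}$, all jointly distributed. Let $\mathcal{F}$ be a class of functions $\mathcal{X} \to [0,1]$, $\alpha \ge 0$, and let $S \subseteq \mathcal{X}$ be $\alpha$-indistinguishable with respect to $\mathcal{F}$ and $Y$. Let $g : \mathcal{H} \to [0,1]$ satisfy, for some $\eta \ge 0$ and all $\beta, \gamma \in \mathbb{R}$, $$\mathbb{E}_S[(Y - g(H))^2] \le \mathbb{E}_S[(Y - \gamma - \beta g(H))^2] + \eta.$$ Then for every $f \in \mathcal{F}$, $$\mathbb{E}_S[(Y - g(H))^2] + 4\,\mathrm{Cov}_S(Y, g(H))^2 \le \mathbb{E}_S[(Y - f(X))^2] + 2\alpha + \eta.$$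
   Context: For $S \subseteq \mathcal{X}$ with $\mathbb{P}(X \in S) > 0$, $\mathbb{E}_S$ and $\mathrm{Cov}_S$ denote expectation and covariance conditional on $\{X \in S\}$. A set $S \subseteq \mathcal{X}$ is $\alpha$-indistinguishable with respect to $\mathcal{F}$ and $Y$ if $|\mathrm{Cov}(f(X), Y \mid X \in S)| \le \alpha$ for all $f \in \mathcal{F}$. *)

theory Defs
  imports "HOL-Probability.Probability"
begin

definition cond_exp_on :: "'a measure \<Rightarrow> 'a set \<Rightarrow> ('a \<Rightarrow> real) \<Rightarrow> real" where
  "cond_exp_on M A Z = (\<integral>\<omega>. indicator A \<omega> * Z \<omega> \<partial>M) / measure M A"

definition cond_cov_on :: "'a measure \<Rightarrow> 'a set \<Rightarrow> ('a \<Rightarrow> real) \<Rightarrow> ('a \<Rightarrow> real) \<Rightarrow> real" where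
  "cond_cov_on M A Z W =
     cond_exp_on M A (\<lambda>\<omega>. Z \<omega> * W \<omega>) - cond_exp_on M A Z * cond_exp_on M A W"

definition indistinguishable ::
  "'a measure \<Rightarrow> ('a \<Rightarrow> 'x) \<Rightarrow> ('a \<Rightarrow> real) \<Rightarrow> ('x \<Rightarrow> real) set \<Rightarrow> real \<Rightarrow> 'x set \<Rightarrow> bool" where
  "indistinguishable M X Y F \<alpha> S \<longleftrightarrow>
     (\<forall>f\<in>F. \<bar>cond_cov_on M (X -` S \<inter> space M) (\<lambda>\<omega>. f (X \<omega>)) Y\<bar> \<le> \<alpha>)"

end

theory Submission
  imports Defs
begin

text \<open>Write \<open>E\<close>, \<open>Var\<close> and \<open>Cov\<close> for the moments conditional on \<open>X \<in> S\<close>, \<open>G = g(H)\<close> and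
  \<open>c = Cov(Y, G)\<close>. Choosing \<open>\<beta> = 4c\<close> and \<open>\<gamma> = E(Y - \<beta>G)\<close> in the hypothesis on \<open>g\<close> bounds
  \<open>E(Y - G)\<^sup>2 - \<eta>\<close> by \<open>Var(Y - \<beta>G) = Var Y - 8c\<^sup>2 + 16c\<^sup>2 Var G \<le> Var Y - 4c\<^sup>2\<close>, because a
  \<open>[0,1]\<close>-valued variable has variance at most \<open>1/4\<close>. On the other hand
  \<open>E(Y - f(X))\<^sup>2 \<ge> Var(Y - f(X)) = Var Y - 2 Cov(Y, f(X)) + Var f(X) \<ge> Var Y - 2\<alpha>\<close>
  by indistinguishability.\<close>

definition bounded_rv :: "'a measure \<Rightarrow> ('a \<Rightarrow> real) \<Rightarrow> bool" where
  "bounded_rv M Z \<longleftrightarrow> Z \<in> borel_measurable M \<and> (\<exists>B. \<forall>\<omega>\<in>space M. \<bar>Z \<omega>\<bar> \<le> B)"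

lemma bounded_rv_const [simp]: "bounded_rv M (\<lambda>\<omega>. c)"
  unfolding bounded_rv_def by auto

lemma bounded_rv_unit_interval:
  "Z \<in> borel_measurable M \<Longrightarrow> (\<And>\<omega>. \<omega> \<in> space M \<Longrightarrow> Z \<omega> \<in> {0..1}) \<Longrightarrow> bounded_rv M Z"
  unfolding bounded_rv_def by (auto intro!: exI[of _ 1])

lemma bounded_rv_add [simp]:
  "bounded_rv M Z \<Longrightarrow> bounded_rv M W \<Longrightarrow> bounded_rv M (\<lambda>\<omega>. Z \<omega> + W \<omega>)"
  unfolding bounded_rv_def
  by (auto intro!: exI[of _ "_ + _"] order.trans[OF abs_triangle_ineq] add_mono)

lemma bounded_rv_diff [simp]:
  "bounded_rv M Z \<Longrightarrow> bounded_rv M W \<Longrightarrow> bounded_rv M (\<lambda>\<omega>. Z \<omega> - W \<omega>)"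
  unfolding bounded_rv_def
  by (auto intro!: exI[of _ "_ + _"] order.trans[OF abs_triangle_ineq4] add_mono)

lemma bounded_rv_mult [simp]:
  "bounded_rv M Z \<Longrightarrow> bounded_rv M W \<Longrightarrow> bounded_rv M (\<lambda>\<omega>. Z \<omega> * W \<omega>)"
  unfolding bounded_rv_def abs_mult
  by (auto intro!: exI[of _ "_ * _"] mult_mono order.trans[OF abs_ge_zero])

lemmas bounded_rv_closed = bounded_rv_const bounded_rv_add bounded_rv_diff bounded_rv_mult

lemma (in finite_measure) integrable_bounded_rv: "bounded_rv M Z \<Longrightarrow> integrable M Z"
  unfolding bounded_rv_def by (metis AE_I2 integrable_const_bound real_norm_def)

lemma cond_exp_on_cmult: "cond_exp_on M A (\<lambda>\<omega>. c * Z \<omega>) = c * cond_exp_on M A Z"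
  unfolding cond_exp_on_def by (simp add: mult.left_commute[of _ c])

lemma cond_exp_on_nonneg: "(\<And>\<omega>. \<omega> \<in> space M \<Longrightarrow> 0 \<le> Z \<omega>) \<Longrightarrow> 0 \<le> cond_exp_on M A Z"
  unfolding cond_exp_on_def by (intro divide_nonneg_nonneg integral_nonneg) auto

context
  fixes M :: "'a measure" and A :: "'a set"
  assumes A_sets: "A \<in> sets M"
begin

lemma cond_exp_on_add:
  "integrable M Z \<Longrightarrow> integrable M W \<Longrightarrow>
    cond_exp_on M A (\<lambda>\<omega>. Z \<omega> + W \<omega>) = cond_exp_on M A Z + cond_exp_on M A W"
  unfolding cond_exp_on_def
  by (simp add: distrib_left add_divide_distrib integrable_real_mult_indicator A_sets
      mult.commute[of "indicator A _"])

lemma cond_exp_on_diff: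
  "integrable M Z \<Longrightarrow> integrable M W \<Longrightarrow>
    cond_exp_on M A (\<lambda>\<omega>. Z \<omega> - W \<omega>) = cond_exp_on M A Z - cond_exp_on M A W"
  unfolding cond_exp_on_def
  by (simp add: right_diff_distrib diff_divide_distrib integrable_real_mult_indicator A_sets
      mult.commute[of "indicator A _"])

lemma cond_exp_on_const: "measure M A \<noteq> 0 \<Longrightarrow> cond_exp_on M A (\<lambda>\<omega>. c) = c"
  unfolding cond_exp_on_def using A_sets by (simp add: Int_absorb2 sets.sets_into_space)

end

abbreviation cond_var_on :: "'a measure \<Rightarrow> 'a set \<Rightarrow> ('a \<Rightarrow> real) \<Rightarrow> real" where
  "cond_var_on M A Z \<equiv> cond_cov_on M A Z Z"

lemma cond_cov_on_commute: "cond_cov_on M A Z W = cond_cov_on M A W Z"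
  unfolding cond_cov_on_def by (simp add: mult.commute)

context
  fixes M :: "'a measure" and A :: "'a set"
  assumes finite: "finite_measure M" and A_sets: "A \<in> sets M" and A_nonnull: "measure M A \<noteq> 0"
begin

lemmas cond_exp_on_linear =
  cond_exp_on_add[OF A_sets] cond_exp_on_diff[OF A_sets] cond_exp_on_cmult
  cond_exp_on_const[OF A_sets A_nonnull] finite_measure.integrable_bounded_rv[OF finite]

lemma cond_exp_on_square_diff_const:
  assumes "bounded_rv M Z"
  shows "cond_exp_on M A (\<lambda>\<omega>. (Z \<omega> - a)\<^sup>2) = cond_var_on M A Z + (cond_exp_on M A Z - a)\<^sup>2"
proof -
  have "(\<lambda>\<omega>. (Z \<omega> - a)\<^sup>2) = (\<lambda>\<omega>. Z \<omega> * Z \<omega> - 2 * a * Z \<omega> + a\<^sup>2)"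
    by (simp add: power2_eq_square algebra_simps)
  then have "cond_exp_on M A (\<lambda>\<omega>. (Z \<omega> - a)\<^sup>2)
      = cond_exp_on M A (\<lambda>\<omega>. Z \<omega> * Z \<omega>) - 2 * a * cond_exp_on M A Z + a\<^sup>2"
    using assms by (simp only: cond_exp_on_linear bounded_rv_closed)
  then show ?thesis
    by (simp add: cond_cov_on_def power2_eq_square algebra_simps)
qed

lemma cond_var_on_nonneg: "bounded_rv M Z \<Longrightarrow> 0 \<le> cond_var_on M A Z"
  using cond_exp_on_square_diff_const[of Z "cond_exp_on M A Z"]
    cond_exp_on_nonneg[where Z="\<lambda>\<omega>. (Z \<omega> - cond_exp_on M A Z)\<^sup>2" and M=M and A=A]
  by simp

lemma cond_var_on_diff_scaled:
  assumes "bounded_rv M Z" "bounded_rv M W"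
  shows "cond_var_on M A (\<lambda>\<omega>. Z \<omega> - b * W \<omega>)
    = cond_var_on M A Z - 2 * b * cond_cov_on M A Z W + b\<^sup>2 * cond_var_on M A W"
proof -
  have "(\<lambda>\<omega>. (Z \<omega> - b * W \<omega>) * (Z \<omega> - b * W \<omega>))
      = (\<lambda>\<omega>. Z \<omega> * Z \<omega> - 2 * b * (Z \<omega> * W \<omega>) + b\<^sup>2 * (W \<omega> * W \<omega>))"
    by (simp add: power2_eq_square algebra_simps)
  then have square: "cond_exp_on M A (\<lambda>\<omega>. (Z \<omega> - b * W \<omega>) * (Z \<omega> - b * W \<omega>))
      = cond_exp_on M A (\<lambda>\<omega>. Z \<omega> * Z \<omega>) - 2 * b * cond_exp_on M A (\<lambda>\<omega>. Z \<omega> * W \<omega>)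
        + b\<^sup>2 * cond_exp_on M A (\<lambda>\<omega>. W \<omega> * W \<omega>)"
    using assms by (simp only: cond_exp_on_linear bounded_rv_closed)
  have mean: "cond_exp_on M A (\<lambda>\<omega>. Z \<omega> - b * W \<omega>) = cond_exp_on M A Z - b * cond_exp_on M A W"
    using assms by (simp only: cond_exp_on_linear bounded_rv_closed)
  show ?thesis
    unfolding cond_cov_on_def square mean by (simp add: power2_eq_square algebra_simps)
qed

lemma cond_var_on_le_quarter:
  assumes "W \<in> borel_measurable M" "\<And>\<omega>. \<omega> \<in> space M \<Longrightarrow> W \<omega> \<in> {0..1}"
  shows "cond_var_on M A W \<le> 1/4"
proof -
  have W: "bounded_rv M W"
    using assms by (rule bounded_rv_unit_interval)
  have "0 \<le> cond_exp_on M A (\<lambda>\<omega>. W \<omega> - W \<omega> * W \<omega>)"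
    using assms(2) by (intro cond_exp_on_nonneg) (simp add: mult_left_le)
  then have "cond_exp_on M A (\<lambda>\<omega>. W \<omega> * W \<omega>) \<le> cond_exp_on M A W"
    using W by (simp only: cond_exp_on_linear bounded_rv_closed)
  moreover have "0 \<le> (cond_exp_on M A W - 1/2)\<^sup>2"
    by simp
  ultimately show ?thesis
    unfolding cond_cov_on_def by (simp add: power2_eq_square algebra_simps)
qed

lemma cond_var_on_sub_le_cond_exp_square_diff:
  assumes "bounded_rv M Z" "bounded_rv M W"
  shows "cond_var_on M A Z - 2 * cond_cov_on M A Z W \<le> cond_exp_on M A (\<lambda>\<omega>. (Z \<omega> - W \<omega>)\<^sup>2)"
proof -
  have "cond_var_on M A Z - 2 * cond_cov_on M A Z W \<le> cond_var_on M A (\<lambda>\<omega>. Z \<omega> - 1 * W \<omega>)"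
    using assms cond_var_on_diff_scaled[of Z W 1] cond_var_on_nonneg[of W] by simp
  also have "\<dots> \<le> cond_exp_on M A (\<lambda>\<omega>. (Z \<omega> - W \<omega>)\<^sup>2)"
    using assms cond_exp_on_square_diff_const[of "\<lambda>\<omega>. Z \<omega> - W \<omega>" 0] by simp
  finally show ?thesis .
qed

lemma cond_var_on_regression_residual_le:
  assumes "bounded_rv M Z" "W \<in> borel_measurable M" "\<And>\<omega>. \<omega> \<in> space M \<Longrightarrow> W \<omega> \<in> {0..1}"
  defines "c \<equiv> cond_cov_on M A Z W"
  shows "cond_var_on M A (\<lambda>\<omega>. Z \<omega> - 4 * c * W \<omega>) \<le> cond_var_on M A Z - 4 * c\<^sup>2"
proof -
  have "cond_var_on M A (\<lambda>\<omega>. Z \<omega> - 4 * c * W \<omega>)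
      = cond_var_on M A Z - 8 * c\<^sup>2 + 16 * c\<^sup>2 * cond_var_on M A W"
    using cond_var_on_diff_scaled[OF assms(1) bounded_rv_unit_interval[OF assms(2,3)]]
    by (simp add: c_def power2_eq_square)
  also have "\<dots> \<le> cond_var_on M A Z - 8 * c\<^sup>2 + 16 * c\<^sup>2 * (1/4)"
    using cond_var_on_le_quarter[OF assms(2,3)] by (intro add_left_mono mult_left_mono) auto
  finally show ?thesis by simp
qed

end

theorem corollary1:
  fixes M :: "'a measure" and MX :: "'x measure" and MH :: "'h measure"
    and X :: "'a \<Rightarrow> 'x" and Y :: "'a \<Rightarrow> real" and H :: "'a \<Rightarrow> 'h"
    and F :: "('x \<Rightarrow> real) set" and g :: "'h \<Rightarrow> real"
    and S :: "'x set" and \<alpha> \<eta> :: real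
  assumes "prob_space M"
    and "X \<in> measurable M MX" and "H \<in> measurable M MH" and "Y \<in> borel_measurable M"
    and "\<And>\<omega>. \<omega> \<in> space M \<Longrightarrow> Y \<omega> \<in> {0..1}"
    and "\<And>f. f \<in> F \<Longrightarrow> f \<in> borel_measurable MX \<and> (\<forall>x\<in>space MX. f x \<in> {0..1})"
    and "\<alpha> \<ge> 0"
    and "S \<in> sets MX" and "measure M (X -` S \<inter> space M) > 0"
    and "indistinguishable M X Y F \<alpha> S"
    and "g \<in> borel_measurable MH" and "\<And>h. h \<in> space MH \<Longrightarrow> g h \<in> {0..1}"
    and "\<eta> \<ge> 0"
    and "\<And>\<beta> \<gamma>. cond_exp_on M (X -` S \<inter> space M) (\<lambda>\<omega>. (Y \<omega> - g (H \<omega>))\<^sup>2)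
              \<le> cond_exp_on M (X -` S \<inter> space M) (\<lambda>\<omega>. (Y \<omega> - \<gamma> - \<beta> * g (H \<omega>))\<^sup>2) + \<eta>"
  shows "\<forall>f\<in>F.
    cond_exp_on M (X -` S \<inter> space M) (\<lambda>\<omega>. (Y \<omega> - g (H \<omega>))\<^sup>2)
      + 4 * (cond_cov_on M (X -` S \<inter> space M) Y (\<lambda>\<omega>. g (H \<omega>)))\<^sup>2
    \<le> cond_exp_on M (X -` S \<inter> space M) (\<lambda>\<omega>. (Y \<omega> - f (X \<omega>))\<^sup>2) + 2 * \<alpha> + \<eta>"
proof
  fix f assume "f \<in> F"
  let ?A = "X -` S \<inter> space M" and ?G = "\<lambda>\<omega>. g (H \<omega>)"
  let ?c = "cond_cov_on M ?A Y ?G"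
  let ?R = "\<lambda>\<omega>. Y \<omega> - 4 * ?c * ?G \<omega>"
  have finite: "finite_measure M"
    using assms(1) by (simp add: prob_space_def)
  have A: "?A \<in> sets M" "measure M ?A \<noteq> 0"
    using assms(2,8,9) by auto
  have Y: "bounded_rv M Y"
    using assms(4,5) by (rule bounded_rv_unit_interval)
  have G: "?G \<in> borel_measurable M" "\<And>\<omega>. \<omega> \<in> space M \<Longrightarrow> ?G \<omega> \<in> {0..1}"
    using assms(3,11,12) measurable_space[OF assms(3)] by auto
  have fX: "bounded_rv M (\<lambda>\<omega>. f (X \<omega>))"
    using assms(2) assms(6)[OF \<open>f \<in> F\<close>] measurable_space[OF assms(2)]
    by (intro bounded_rv_unit_interval) auto
  have "(\<lambda>\<omega>. (Y \<omega> - cond_exp_on M ?A ?R - 4 * ?c * ?G \<omega>)\<^sup>2)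
      = (\<lambda>\<omega>. (?R \<omega> - cond_exp_on M ?A ?R)\<^sup>2)"
    by (simp add: algebra_simps)
  then have "cond_exp_on M ?A (\<lambda>\<omega>. (Y \<omega> - ?G \<omega>)\<^sup>2) \<le> cond_var_on M ?A ?R + \<eta>"
    using assms(14)[of "cond_exp_on M ?A ?R" "4 * ?c"]
      cond_exp_on_square_diff_const[OF finite A, of ?R] Y bounded_rv_unit_interval[OF G]
    by simp
  also have "\<dots> \<le> cond_var_on M ?A Y - 4 * ?c\<^sup>2 + \<eta>"
    using cond_var_on_regression_residual_le[OF finite A Y G] by simp
  also have "\<dots> \<le> cond_exp_on M ?A (\<lambda>\<omega>. (Y \<omega> - f (X \<omega>))\<^sup>2) + 2 * \<alpha> - 4 * ?c\<^sup>2 + \<eta>"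
    using cond_var_on_sub_le_cond_exp_square_diff[OF finite A Y fX] \<open>f \<in> F\<close> assms(10)
    by (auto simp: indistinguishable_def cond_cov_on_commute abs_le_iff)
  finally show "cond_exp_on M ?A (\<lambda>\<omega>. (Y \<omega> - ?G \<omega>)\<^sup>2) + 4 * ?c\<^sup>2
      \<le> cond_exp_on M ?A (\<lambda>\<omega>. (Y \<omega> - f (X \<omega>))\<^sup>2) + 2 * \<alpha> + \<eta>"
    by simp
qed

end
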